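(* Let $n\ge 2$ and assume a weighing matrix of order $n$ and weight $n-1$ exists. Let $q$ be a prime power with $q\ge n$. Then there exists a set of $q-1$ mutually unbiased weighing matrices of order $nq$ and weight $(n-1)^2$.
   Context: A weighing matrix of order $n$ and weight $k$ is an $n\times n$ matrix $W$ with entries in $\{1,-1,0\}$ such that $WW^T=kI_n$. Two weighing matrices $W_1,W_2$ of order $N$ and weight $K$ are unbiased if $\frac{1}{\sqrt{K}}W_1W_2^T$ is a weighing matrix of order $N$ and weight $K$; a set is mutually unbiased if any two distinct members are unbiased. *)

theory Defs
  imports "Jordan_Normal_Form.Matrix" "HOL-Number_Theory.Prime_Powers"
begin

definition weighing_matrix :: "nat \<Rightarrow> nat \<Rightarrow> int mat \<Rightarrow> bool" where
  "weighing_matrix n k W \<longleftrightarrow>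
     W \<in> carrier_mat n n \<and>
     (\<forall>i<n. \<forall>j<n. W $$ (i, j) \<in> {1, -1, 0}) \<and>
     W * W\<^sup>T = of_nat k \<cdot>\<^sub>m 1\<^sub>m n"

definition unbiased :: "nat \<Rightarrow> nat \<Rightarrow> int mat \<Rightarrow> int mat \<Rightarrow> bool" where
  "unbiased N K W1 W2 \<longleftrightarrow>
     (\<exists>W. weighing_matrix N K W \<and>
          (1 / sqrt (real K)) \<cdot>\<^sub>m map_mat real_of_int (W1 * W2\<^sup>T) = map_mat real_of_int W)"

definition mutually_unbiased_weighing :: "nat \<Rightarrow> nat \<Rightarrow> int mat set \<Rightarrow> bool" where
  "mutually_unbiased_weighing N K S \<longleftrightarrow>
     (\<forall>W\<in>S. weighing_matrix N K W) \<and>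
     (\<forall>W1\<in>S. \<forall>W2\<in>S. W1 \<noteq> W2 \<longrightarrow> unbiased N K W1 W2)"

end

(*
  Let W be a weighing matrix of order n and weight k and let F be a field with q >= n
  elements, containing distinct elements e_0, ..., e_(n-1). Index rows and columns by pairs
  (r, x) with r < n and x in F, and for a in F let

    N_a((r, x), (s, y)) = sum_l W_rl W_sl [y = x + a e_l],

  that is, N_a = sum_l w_l w_l^T (x) P(a e_l), where w_l is the l-th column of W and P(t) is
  the permutation matrix of the translation by t. Since the columns of W are orthogonal of
  norm k, N_a N_b^T = k N_(a-b), and N_0 = W W^T (x) I = k I. For a <> 0 the points
  x + a e_l are distinct, so N_a has entries in {0, 1, -1} and is a weighing matrix of weight
  k^2, and N_a N_b^T / k = N_(a-b) is again one: the q - 1 matrices N_a with a <> 0 are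
  mutually unbiased. They are pairwise distinct because N_c has a zero diagonal entry for
  c <> 0 (this is where k < n is needed), whereas N_a = N_b would force N_(a-b) = k I.

  A field of order q = p^m is found in an algebraic closure of Z/pZ as the set of roots of
  X^q - X: by the Frobenius identity this set is closed under the field operations, and each
  root a is simple because X^q - X = (X - a)((X - a)^(q-1) - 1).
*)

theory Submission
  imports Defs "Jordan_Normal_Form.Determinant" "HOL-Algebra.Algebraic_Closure" "HOL-Number_Theory.Residues"
begin

section \<open>Finite fields of prime power order\<close>

lemma (in cring) binomial_expansion:
  assumes x: "x \<in> carrier R" and y: "y \<in> carrier R"
  shows "(x \<oplus> y) [^] (n::nat) = (\<Oplus>k\<in>{..n}. [(n choose k)] \<cdot> (x [^] k \<otimes> y [^] (n - k)))"
proof (induction n)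
  case 0
  then show ?case using x y by simp
next
  case (Suc n)
  define t where "t k = x [^] k \<otimes> y [^] (Suc n - k)" for k
  have t: "t k \<in> carrier R" for k using x y by (simp add: t_def)
  have x_times: "x \<otimes> ([(n choose k)] \<cdot> (x [^] k \<otimes> y [^] (n - k))) = [(n choose k)] \<cdot> t (Suc k)"
    if "k \<le> n" for k
    using x y that by (simp add: t_def add_pow_rdistr nat_pow_Suc2 m_assoc m_lcomm)
  have y_times: "y \<otimes> ([(n choose k)] \<cdot> (x [^] k \<otimes> y [^] (n - k))) = [(n choose k)] \<cdot> t k"
    if "k \<le> n" for k
    using x y that by (simp add: t_def add_pow_rdistr Suc_diff_le m_ac)
  have "(x \<oplus> y) [^] Suc n = x \<otimes> (x \<oplus> y) [^] n \<oplus> y \<otimes> (x \<oplus> y) [^] n"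
    using x y by (simp add: m_comm l_distr)
  also have "\<dots> = (\<Oplus>k\<in>{..n}. [(n choose k)] \<cdot> t (Suc k)) \<oplus> (\<Oplus>k\<in>{..n}. [(n choose k)] \<cdot> t k)"
    using x y t x_times y_times by (simp add: Suc finsum_rdistr cong: finsum_cong)
  also have "(\<Oplus>k\<in>{..n}. [(n choose k)] \<cdot> t k) = (\<Oplus>k\<in>{..Suc n}. [(n choose k)] \<cdot> t k)"
    using t by (simp add: finsum_Suc binomial_eq_0)
  also have "\<dots> = (\<Oplus>k\<in>{..n}. [(n choose Suc k)] \<cdot> t (Suc k)) \<oplus> [(n choose 0)] \<cdot> t 0"
    using t by (intro finsum_Suc2) auto
  also have "(\<Oplus>k\<in>{..n}. [(n choose k)] \<cdot> t (Suc k)) \<oplus> \<dots>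
      = (\<Oplus>k\<in>{..n}. [(Suc n choose Suc k)] \<cdot> t (Suc k)) \<oplus> [(Suc n choose 0)] \<cdot> t 0"
    using t by (simp add: a_assoc[symmetric] finsum_addf[symmetric] add.nat_pow_mult)
  also have "\<dots> = (\<Oplus>k\<in>{..Suc n}. [(Suc n choose k)] \<cdot> t k)"
    using t by (intro finsum_Suc2[symmetric]) auto
  finally show ?case by (simp add: t_def)
qed

lemma (in ring) add_pow_char_multiple:
  assumes char: "[(p::nat)] \<cdot> \<one> = \<zero>" and "p dvd c" and z: "z \<in> carrier R"
  shows "[c] \<cdot> z = \<zero>"
proof -
  obtain d where "c = p * d" using \<open>p dvd c\<close> by blast
  have "[p] \<cdot> z = ([p] \<cdot> \<one>) \<otimes> z" using z by (simp add: add_pow_ldistr)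
  moreover have "[c] \<cdot> z = [d] \<cdot> ([p] \<cdot> z)"
    using z \<open>c = p * d\<close> by (simp add: add.nat_pow_pow mult.commute)
  ultimately show ?thesis using char z by simp
qed

lemma (in cring) frobenius_add:
  assumes p: "Factorial_Ring.prime (p::nat)" and char: "[p] \<cdot> \<one> = \<zero>"
    and x: "x \<in> carrier R" and y: "y \<in> carrier R"
  shows "(x \<oplus> y) [^] p = x [^] p \<oplus> y [^] p"
proof -
  define f where "f k = [(p choose k)] \<cdot> (x [^] k \<otimes> y [^] (p - k))" for k
  have f: "f k \<in> carrier R" for k using x y by (simp add: f_def)
  have inner_terms_vanish: "f (Suc k) = \<zero>" if "Suc k < p" for k
    using add_pow_char_multiple[OF char dvd_choose_prime[of "Suc k" p]] p that x y
    by (simp add: f_def)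
  obtain r where r: "p = Suc (Suc r)"
    using prime_ge_2_nat[OF p] by (metis add_2_eq_Suc le_Suc_ex)
  have "(x \<oplus> y) [^] p = (\<Oplus>k\<in>{..Suc (Suc r)}. f k)"
    using binomial_expansion[OF x y, of p] r by (simp only: f_def)
  also have "\<dots> = f p \<oplus> (\<Oplus>k\<in>{..Suc r}. f k)"
    using f r by (simp only: finsum_Suc Pi_I)
  also have "(\<Oplus>k\<in>{..Suc r}. f k) = (\<Oplus>k\<in>{..r}. f (Suc k)) \<oplus> f 0"
    using f by (intro finsum_Suc2) auto
  also have "(\<Oplus>k\<in>{..r}. f (Suc k)) = \<zero>"
    using inner_terms_vanish r by (simp add: finsum_zero cong: finsum_cong)
  finally show ?thesis using x y f by (simp add: f_def)
qed

lemma (in cring) frobenius_pow_add: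
  assumes p: "Factorial_Ring.prime (p::nat)" and char: "[p] \<cdot> \<one> = \<zero>"
    and x: "x \<in> carrier R" and y: "y \<in> carrier R"
  shows "(x \<oplus> y) [^] (p ^ m) = x [^] (p ^ m) \<oplus> y [^] (p ^ m)"
proof (induction m)
  case (Suc m)
  have "(x \<oplus> y) [^] (p ^ Suc m) = ((x \<oplus> y) [^] (p ^ m)) [^] p"
    using x y by (simp add: nat_pow_pow mult.commute)
  also have "\<dots> = x [^] (p ^ Suc m) \<oplus> y [^] (p ^ Suc m)"
    using Suc frobenius_add[OF p char] x y by (simp add: nat_pow_pow mult.commute)
  finally show ?case .
qed (use x y in simp)

lemma (in cring) frobenius_pow_minus:
  assumes p: "Factorial_Ring.prime (p::nat)" and char: "[p] \<cdot> \<one> = \<zero>"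
    and x: "x \<in> carrier R" and y: "y \<in> carrier R"
  shows "(x \<ominus> y) [^] (p ^ m) = x [^] (p ^ m) \<ominus> y [^] (p ^ m)"
proof -
  have "x [^] (p ^ m) = ((x \<ominus> y) \<oplus> y) [^] (p ^ m)"
    using x y by (simp add: a_minus_def a_assoc l_neg)
  also have "\<dots> = (x \<ominus> y) [^] (p ^ m) \<oplus> y [^] (p ^ m)"
    using frobenius_pow_add[OF p char] x y by simp
  finally have "x [^] (p ^ m) = (x \<ominus> y) [^] (p ^ m) \<oplus> y [^] (p ^ m)" .
  then show ?thesis
    unfolding minus_eq[of "x [^] (p ^ m)"] using x y by (subst add.inv_solve_right) auto
qed

lemma (in cring) frobenius_fixed_point_factor:
  assumes p: "Factorial_Ring.prime (p::nat)" and char: "[p] \<cdot> \<one> = \<zero>" and m: "m > 0"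
    and x: "x \<in> carrier R" and c: "c \<in> carrier R" and fixed: "c [^] (p ^ m) = c"
  shows "x [^] (p ^ m) \<ominus> x = (x \<ominus> c) \<otimes> ((x \<ominus> c) [^] (p ^ m - 1) \<ominus> \<one>)"
proof -
  have q: "p ^ m = Suc (p ^ m - 1)"
    using one_less_power[OF prime_gt_1_nat[OF p] m] by simp
  define y where "y = x \<ominus> c"
  define z where "z = y [^] (p ^ m - 1)"
  define w where "w = x [^] (p ^ m)"
  have closed: "y \<in> carrier R" "z \<in> carrier R" "w \<in> carrier R"
    using x c by (simp_all add: y_def z_def w_def)
  have "y \<otimes> z = w \<ominus> c"
  proof -
    have "y \<otimes> z = y [^] (p ^ m)"
      unfolding z_def by (subst (2) q) (rule nat_pow_Suc2[OF closed(1), symmetric])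
    also have "\<dots> = w \<ominus> c"
      using frobenius_pow_minus[OF p char x c] fixed by (simp add: y_def w_def)
    finally show ?thesis .
  qed
  then have "w \<ominus> x = y \<otimes> (z \<ominus> \<one>)" using x c closed unfolding y_def by algebra
  then show ?thesis unfolding y_def z_def w_def .
qed

lemma (in ring_hom_ring) hom_add_pow_nat:
  "x \<in> carrier R \<Longrightarrow> h ([(k::nat)] \<cdot>\<^bsub>R\<^esub> x) = [k] \<cdot>\<^bsub>S\<^esub> h x"
  by (induction k) (auto simp: R.add.nat_pow_Suc S.add.nat_pow_Suc)

lemma (in domain) var_minus_const:
  assumes a: "a \<in> carrier R"
  shows "X \<ominus>\<^bsub>poly_ring R\<^esub> poly_of_const a = [\<one>, \<ominus> a]"
proof -
  have "poly_of_const a \<in> carrier (poly_ring R)"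
    using a by (auto simp: poly_of_const_def univ_poly_carrier[symmetric] polynomial_def)
  then have "\<ominus>\<^bsub>poly_ring R\<^esub> poly_of_const a = map (\<lambda>b. \<ominus> b) (poly_of_const a)"
    using univ_poly_a_inv_def'[OF carrier_is_subring] by blast
  then show ?thesis
    using a by (auto simp: a_minus_def var_def poly_of_const_def univ_poly_add)
qed

lemma (in field) frobenius_fixed_point_simple_root:
  assumes p: "Factorial_Ring.prime (p::nat)" and char: "[p] \<cdot> \<one> = \<zero>" and m: "m > 0"
    and a: "a \<in> carrier R" and fixed: "a [^] (p ^ m) = a"
  shows "count (roots (X [^]\<^bsub>poly_ring R\<^esub> (p ^ m) \<ominus>\<^bsub>poly_ring R\<^esub> X)) a = 1"
proof -
  let ?P = "poly_ring R"
  interpret UP: domain ?P by (rule univ_poly_is_domain[OF carrier_is_subring])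
  have "R\<lparr>carrier := carrier R\<rparr> = R" by simp
  then interpret const: ring_hom_ring R ?P poly_of_const
    using canonical_embedding_ring_hom[OF carrier_is_subring] by simp
  interpret ev: ring_hom_ring ?P R "\<lambda>f. eval f a"
    by (rule eval_ring_hom[OF carrier_is_subring a])
  define q where "q = p ^ m"
  have "q - 1 > 0"
    using one_less_power[OF prime_gt_1_nat[OF p] m] by (simp add: q_def)
  have X: "X \<in> carrier ?P" by (rule var_closed(1)[OF carrier_is_subring])
  define c where "c = poly_of_const a"
  have c: "c \<in> carrier ?P" using a by (simp add: c_def)
  define Y where "Y = X \<ominus>\<^bsub>?P\<^esub> c"
  have Y: "Y \<in> carrier ?P" using X c by (simp add: Y_def)
  have Y_lin: "Y = [\<one>, \<ominus> a]" using var_minus_const[OF a] by (simp add: Y_def c_def)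
  have char_P: "[p] \<cdot>\<^bsub>?P\<^esub> \<one>\<^bsub>?P\<^esub> = \<zero>\<^bsub>?P\<^esub>"
    using const.hom_add_pow_nat[OF one_closed, of p] char by simp
  have c_fixed: "c [^]\<^bsub>?P\<^esub> q = c"
    using const.hom_nat_pow[OF a, of q, symmetric] fixed by (simp add: c_def q_def)
  define h where "h = Y [^]\<^bsub>?P\<^esub> (q - 1) \<ominus>\<^bsub>?P\<^esub> \<one>\<^bsub>?P\<^esub>"
  have h: "h \<in> carrier ?P" using Y by (simp add: h_def)
  have "X [^]\<^bsub>?P\<^esub> q \<ominus>\<^bsub>?P\<^esub> X = Y \<otimes>\<^bsub>?P\<^esub> h"
    unfolding q_def Y_def h_def
    by (rule UP.frobenius_fixed_point_factor[OF p char_P m X c c_fixed[unfolded q_def]])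
  then have factor: "X [^]\<^bsub>?P\<^esub> (p ^ m) \<ominus>\<^bsub>?P\<^esub> X = [\<one>, \<ominus> a] \<otimes>\<^bsub>?P\<^esub> h"
    by (simp only: q_def Y_lin)
  have "eval Y a = \<zero>" using a by (simp add: Y_lin r_neg)
  then have "eval h a = \<ominus> \<one>"
    using Y \<open>q - 1 > 0\<close> by (simp add: h_def a_minus_def ev.hom_nat_pow nat_pow_zero)
  then have "eval h a \<noteq> \<zero>"
    using one_not_zero by (metis add.inv_eq_1_iff one_closed)
  then have "\<not> is_root h a" and "h \<noteq> []"
    by (auto simp: is_root_def)
  have "count (roots h) a = 0"
    using \<open>\<not> is_root h a\<close> by (simp add: count_eq_zero_iff roots_mem_iff_is_root[OF h])
  moreover have "roots (X [^]\<^bsub>?P\<^esub> (p ^ m) \<ominus>\<^bsub>?P\<^esub> X) = add_mset a (roots h)"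
    unfolding factor by (rule poly_mult_degree_one_monic_imp_same_roots[OF a h \<open>h \<noteq> []\<close>])
  ultimately show ?thesis by (simp only: count_add_mset) simp
qed

lemma (in algebraically_closed) card_frobenius_fixed_points:
  assumes p: "Factorial_Ring.prime (p::nat)" and char: "[p] \<cdot> \<one> = \<zero>" and m: "m > 0"
  shows "card {x \<in> carrier L. x [^] (p ^ m) = x} = p ^ m"
proof -
  let ?P = "poly_ring L"
  interpret UP: domain ?P by (rule univ_poly_is_domain[OF carrier_is_subring])
  define q where "q = p ^ m"
  define F where "F = {x \<in> carrier L. x [^] q = x}"
  define P where "P = X [^]\<^bsub>?P\<^esub> q \<ominus>\<^bsub>?P\<^esub> X"
  have q: "q \<ge> 2" using one_less_power[OF prime_gt_1_nat[OF p] m] by (simp add: q_def)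
  have X: "X \<in> carrier ?P" by (rule var_closed(1)[OF carrier_is_subring])
  have P: "P \<in> carrier ?P" using X by (simp add: P_def)
  have degree_P: "degree P = q"
  proof -
    have Xq: "X [^]\<^bsub>?P\<^esub> q = monom \<one> q"
      using unitary_monom_eq_var_pow[OF carrier_is_subring] by simp
    have monom: "polynomial (carrier L) (monom \<one> q)"
      using Xq UP.nat_pow_closed[OF X, of q] by (simp add: univ_poly_carrier)
    have minus_X: "polynomial (carrier L) (\<ominus>\<^bsub>?P\<^esub> X)"
      using UP.a_inv_closed[OF X] by (simp add: univ_poly_carrier)
    have "degree (\<ominus>\<^bsub>?P\<^esub> X) = 1"
      using univ_poly_a_inv_degree[OF carrier_is_subring X] by (simp add: var_def)
    moreover have "degree (monom \<one> q) = q" by (simp add: monom_def)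
    moreover have "P = poly_add (monom \<one> q) (\<ominus>\<^bsub>?P\<^esub> X)"
      unfolding P_def a_minus_def Xq by (simp add: univ_poly_add)
    ultimately show ?thesis
      using poly_add_degree_eq[OF carrier_is_subring monom minus_X] q by simp
  qed
  have is_root_P: "is_root P x \<longleftrightarrow> x \<in> F" for x
  proof (cases "x \<in> carrier L")
    case True
    interpret ev: ring_hom_ring ?P L "\<lambda>f. eval f x"
      by (rule eval_ring_hom[OF carrier_is_subring True])
    have "eval P x = x [^] q \<ominus> x"
      using X eval_var[OF True] by (simp add: P_def a_minus_def ev.hom_nat_pow)
    moreover have "P \<noteq> []" using degree_P q by auto
    ultimately show ?thesis using True by (simp add: is_root_def F_def r_right_minus_eq)
  qed (simp add: is_root_def F_def)
  have "finite F"
    using finite_number_of_roots[OF P] is_root_P by (simp add: Collect_mem_eq)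
  have "roots P = mset_set F"
  proof (rule multiset_eqI)
    fix x
    show "count (roots P) x = count (mset_set F) x"
    proof (cases "x \<in> F")
      case True
      then show ?thesis
        using frobenius_fixed_point_simple_root[OF p char m] \<open>finite F\<close>
        by (simp add: F_def P_def q_def)
    next
      case False
      then show ?thesis
        using is_root_P roots_mem_iff_is_root[OF P] by (simp add: count_eq_zero_iff)
    qed
  qed
  then have "card F = degree P"
    using roots_over_carrier[OF P] by (simp add: splitted_def)
  then show ?thesis unfolding degree_P by (simp add: F_def q_def)
qed

lemma (in field) frobenius_fixed_points_subfield:
  assumes p: "Factorial_Ring.prime (p::nat)" and char: "[p] \<cdot> \<one> = \<zero>"
  shows "subfield {x \<in> carrier R. x [^] (p ^ m) = x} R"
proof (rule subfieldI'[OF subringI])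
  let ?q = "p ^ m"
  have "?q \<noteq> 0" using prime_gt_0_nat[OF p] by simp
  show "\<ominus> h \<in> {x \<in> carrier R. x [^] ?q = x}" if "h \<in> {x \<in> carrier R. x [^] ?q = x}" for h
  proof -
    have "(\<zero> \<ominus> h) [^] ?q = \<zero> [^] ?q \<ominus> h [^] ?q"
      using frobenius_pow_minus[OF p char zero_closed] that by simp
    then show ?thesis using that \<open>?q \<noteq> 0\<close> by (simp add: minus_eq nat_pow_zero)
  qed
  show "inv k \<in> {x \<in> carrier R. x [^] ?q = x}" if "k \<in> {x \<in> carrier R. x [^] ?q = x} - {\<zero>}" for k
  proof -
    have k: "k \<in> carrier R" "k [^] ?q = k" "inv k \<in> carrier R" "k \<otimes> inv k = \<one>"
      using that by (auto simp: field_Units)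
    then have "k \<otimes> inv k [^] ?q = \<one>"
      using nat_pow_distrib[of k "inv k" ?q] by simp
    then show ?thesis using k comm_inv_char[of k "inv k [^] ?q"] by simp
  qed
qed (auto simp: frobenius_pow_add[OF p char] nat_pow_distrib)

lemma (in residues) add_pow_one: "[(k::nat)] \<cdot> \<one> = int k mod m"
proof (induction k)
  case (Suc k)
  then have "[Suc k] \<cdot> \<one> = (int k mod m + 1) mod m"
    by (simp add: add.nat_pow_Suc res_add_eq res_one_eq)
  then show ?case by (simp add: mod_simps add.commute)
qed (simp add: res_zero_eq)

theorem finite_field_exists:
  assumes "primepow q"
  shows "\<exists>L :: ((int list \<times> nat) multiset \<Rightarrow> int) ring.
           field L \<and> finite (carrier L) \<and> card (carrier L) = q"
proof -
  obtain p m where p: "Factorial_Ring.prime p" and m: "m > 0" and q: "q = p ^ m"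
    using assms by (auto simp: primepow_def)
  define R where "R = residue_ring (int p)"
  interpret R: residues_prime p R by unfold_locales (simp_all add: p R_def)
  obtain L :: "((int list \<times> nat) multiset \<Rightarrow> int) ring"
    where closure: "algebraic_closure L (R.indexed_const ` carrier R)"
      and hom: "R.indexed_const \<in> ring_hom R L"
    using R.exists_closure by blast
  interpret L: algebraic_closure L "R.indexed_const ` carrier R" by (rule closure)
  interpret h: ring_hom_ring R L R.indexed_const
    by (rule ring_hom_ringI2[OF R.is_ring L.is_ring hom])
  have "[p] \<cdot>\<^bsub>R\<^esub> \<one>\<^bsub>R\<^esub> = \<zero>\<^bsub>R\<^esub>" by (simp add: R.add_pow_one R.res_zero_eq)
  then have char: "[p] \<cdot>\<^bsub>L\<^esub> \<one>\<^bsub>L\<^esub> = \<zero>\<^bsub>L\<^esub>"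
    using h.hom_add_pow_nat[OF R.one_closed, of p] by simp
  define F where "F = {x \<in> carrier L. x [^]\<^bsub>L\<^esub> q = x}"
  have "field (L\<lparr>carrier := F\<rparr>)"
    using L.subfield_iff(2)[OF L.frobenius_fixed_points_subfield[OF p char]] by (simp add: F_def q)
  moreover have "card F = q"
    using L.card_frobenius_fixed_points[OF p char m] by (simp add: F_def q)
  moreover have "q > 0" using prime_gt_0_nat[OF p] by (simp add: q)
  ultimately show ?thesis
    by (intro exI[of _ "L\<lparr>carrier := F\<rparr>"]) (auto intro: card_ge_0_finite)
qed

section \<open>Mutually unbiased weighing matrices\<close>

lemma weighing_matrix_transpose:
  assumes W: "weighing_matrix n k W" and k: "k > 0"
  shows "weighing_matrix n k W\<^sup>T"
proof -
  have W_carrier: "W \<in> carrier_mat n n" and W_WT: "W * W\<^sup>T = of_nat k \<cdot>\<^sub>m 1\<^sub>m n"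
    using W by (auto simp: weighing_matrix_def)
  define A :: "rat mat" where "A = of_int_hom.mat_hom W"
  have A: "A \<in> carrier_mat n n" using W_carrier by (simp add: A_def)
  have hom_scalar_one: "of_int_hom.mat_hom (of_nat k \<cdot>\<^sub>m 1\<^sub>m n) = (of_nat k \<cdot>\<^sub>m 1\<^sub>m n :: rat mat)"
    by (rule eq_matI) auto
  have "A * A\<^sup>T = of_int_hom.mat_hom (W * W\<^sup>T)"
    unfolding A_def map_mat_transpose using W_carrier by (simp add: of_int_hom.mat_hom_mult)
  also have "\<dots> = of_nat k \<cdot>\<^sub>m 1\<^sub>m n" unfolding W_WT by (rule hom_scalar_one)
  finally have A_AT: "A * A\<^sup>T = of_nat k \<cdot>\<^sub>m 1\<^sub>m n" .
  have "A * ((1 / of_nat k) \<cdot>\<^sub>m A\<^sup>T) = (1 / of_nat k) \<cdot>\<^sub>m (A * A\<^sup>T)"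
    using A by (intro mult_smult_distrib) auto
  also have "\<dots> = 1\<^sub>m n" unfolding A_AT using k by (intro eq_matI) auto
  finally have "A * ((1 / of_nat k) \<cdot>\<^sub>m A\<^sup>T) = 1\<^sub>m n" .
  with A have "((1 / of_nat k) \<cdot>\<^sub>m A\<^sup>T) * A = 1\<^sub>m n"
    by (intro mat_mult_left_right_inverse[of A n]) simp_all
  then have "(1 / of_nat k) \<cdot>\<^sub>m (A\<^sup>T * A) = 1\<^sub>m n"
    using A by (simp add: mult_smult_assoc_mat[of "A\<^sup>T" n n A n])
  then have "of_nat k \<cdot>\<^sub>m ((1 / of_nat k) \<cdot>\<^sub>m (A\<^sup>T * A)) = of_nat k \<cdot>\<^sub>m 1\<^sub>m n"
    by simp
  moreover have "of_nat k \<cdot>\<^sub>m ((1 / of_nat k) \<cdot>\<^sub>m (A\<^sup>T * A)) = A\<^sup>T * A"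
    using k by (intro eq_matI) auto
  ultimately have "A\<^sup>T * A = of_nat k \<cdot>\<^sub>m 1\<^sub>m n" by simp
  moreover have "A\<^sup>T * A = of_int_hom.mat_hom (W\<^sup>T * W)"
    unfolding A_def map_mat_transpose using W_carrier by (simp add: of_int_hom.mat_hom_mult)
  ultimately have "of_int_hom.mat_hom (W\<^sup>T * W) = (of_int_hom.mat_hom (of_nat k \<cdot>\<^sub>m 1\<^sub>m n) :: rat mat)"
    using hom_scalar_one by simp
  then have "W\<^sup>T * W = of_nat k \<cdot>\<^sub>m 1\<^sub>m n" by (rule of_int_hom.mat_hom_inj)
  then show ?thesis using W by (fastforce simp: weighing_matrix_def)
qed

lemma weighing_matrix_row_products:
  assumes "weighing_matrix n k W" and "r < n" and "r' < n"
  shows "(\<Sum>l<n. W $$ (r, l) * W $$ (r', l)) = (if r = r' then int k else 0)"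
proof -
  have W: "W \<in> carrier_mat n n" and W_WT: "W * W\<^sup>T = of_nat k \<cdot>\<^sub>m 1\<^sub>m n"
    using assms(1) by (auto simp: weighing_matrix_def)
  have "(\<Sum>l<n. W $$ (r, l) * W $$ (r', l)) = (W * W\<^sup>T) $$ (r, r')"
    using W assms(2,3) by (simp add: scalar_prod_def atLeast0LessThan)
  also have "\<dots> = (of_nat k \<cdot>\<^sub>m 1\<^sub>m n :: int mat) $$ (r, r')" by (simp only: W_WT)
  finally show ?thesis using assms(2,3) by simp
qed

lemma weighing_matrix_row_has_zero:
  assumes W: "weighing_matrix n k W" and "k < n" and r: "r < n"
  shows "\<exists>l<n. W $$ (r, l) = 0"
proof (rule ccontr)
  assume "\<not> (\<exists>l<n. W $$ (r, l) = 0)"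
  then have "W $$ (r, l) * W $$ (r, l) = 1" if "l < n" for l
    using W r that by (fastforce simp: weighing_matrix_def)
  then have "(\<Sum>l<n. W $$ (r, l) * W $$ (r, l)) = int n" by simp
  then show False using weighing_matrix_row_products[OF W r r] \<open>k < n\<close> by simp
qed

lemma sum_div_mod:
  assumes "(q::nat) > 0"
  shows "(\<Sum>t<n * q. g (t div q) (t mod q)) = (\<Sum>s<n. \<Sum>u<q. g s u)"
proof (induction n)
  case (Suc n)
  let ?g = "\<lambda>t. g (t div q) (t mod q)"
  have "(\<Sum>t<Suc n * q. ?g t) = (\<Sum>t<n * q. ?g t) + (\<Sum>t\<in>{n * q..<n * q + q}. ?g t)"
    by (simp add: atLeast0LessThan[symmetric] sum.atLeastLessThan_concat add.commute)
  also have "(\<Sum>t\<in>{n * q..<n * q + q}. ?g t) = (\<Sum>u<q. g n u)"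
    using sum.shift_bounds_nat_ivl[of ?g 0 "n * q" q] assms
    by (simp add: atLeast0LessThan add.commute)
  finally show ?case using Suc by simp
qed simp

lemma sum_of_bool_eq_mult:
  assumes "finite A" and "u \<in> A"
  shows "(\<Sum>z\<in>A. of_bool (z = u) * of_bool (z = v)) = (of_bool (u = v) :: 'a :: comm_semiring_1)"
proof -
  have "(\<Sum>z\<in>A. of_bool (z = u) * of_bool (z = v)) = (\<Sum>z\<in>A. if z = u then of_bool (u = v) else (0::'a))"
    by (rule sum.cong) auto
  then show ?thesis using assms by simp
qed

lemma sum_product_rearrange:
  fixes a b :: "'l \<Rightarrow> 'a :: comm_semiring_0"
  shows "(\<Sum>s\<in>S. \<Sum>z\<in>Z. (\<Sum>l\<in>L. a l * f s l * g z l) * (\<Sum>l'\<in>L. b l' * f s l' * h z l'))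
    = (\<Sum>l\<in>L. \<Sum>l'\<in>L. a l * b l' * ((\<Sum>s\<in>S. f s l * f s l') * (\<Sum>z\<in>Z. g z l * h z l')))"
proof -
  have "(\<Sum>s\<in>S. \<Sum>z\<in>Z. (\<Sum>l\<in>L. a l * f s l * g z l) * (\<Sum>l'\<in>L. b l' * f s l' * h z l'))
      = (\<Sum>s\<in>S. \<Sum>z\<in>Z. \<Sum>l\<in>L. \<Sum>l'\<in>L. a l * b l' * (f s l * f s l' * (g z l * h z l')))"
    by (simp add: sum_product ac_simps)
  also have "\<dots> = (\<Sum>s\<in>S. \<Sum>l\<in>L. \<Sum>l'\<in>L. \<Sum>z\<in>Z. a l * b l' * (f s l * f s l' * (g z l * h z l')))"
    by (intro sum.cong refl) (subst sum.swap, intro sum.cong refl, rule sum.swap)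
  also have "\<dots> = (\<Sum>l\<in>L. \<Sum>l'\<in>L. \<Sum>s\<in>S. \<Sum>z\<in>Z. a l * b l' * (f s l * f s l' * (g z l * h z l')))"
    by (subst sum.swap, intro sum.cong refl, rule sum.swap)
  also have "\<dots> = (\<Sum>l\<in>L. \<Sum>l'\<in>L. a l * b l' * ((\<Sum>s\<in>S. f s l * f s l') * (\<Sum>z\<in>Z. g z l * h z l')))"
    by (simp add: sum_product sum_distrib_left ac_simps, intro sum.cong refl, rule sum.swap)
  finally show ?thesis .
qed

lemma (in cring) add_mult_eq_add_mult_iff:
  assumes "x \<in> carrier R" "y \<in> carrier R" "a \<in> carrier R" "b \<in> carrier R" "u \<in> carrier R"
  shows "x \<oplus> a \<otimes> u = y \<oplus> b \<otimes> u \<longleftrightarrow> y = x \<oplus> (a \<ominus> b) \<otimes> u"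
proof
  assume "x \<oplus> a \<otimes> u = y \<oplus> b \<otimes> u"
  then have "y = (x \<oplus> a \<otimes> u) \<ominus> b \<otimes> u" using assms by algebra
  then show "y = x \<oplus> (a \<ominus> b) \<otimes> u" using assms by algebra
qed (use assms in algebra)

locale unbiased_weighing_construction = field R for R (structure) +
  fixes q n k :: nat and W :: "int mat" and e :: "nat \<Rightarrow> 'a"
  assumes enumeration: "bij_betw e {..<q} (carrier R)"
    and weighing: "weighing_matrix n k W"
    and weight: "0 < k" "k < n"
    and order: "n \<le> q"
begin

(* Row and column i stand for the pair (i div q, e (i mod q)). *)
definition shift_matrix :: "'a \<Rightarrow> int mat" where
  "shift_matrix a = mat (n * q) (n * q) (\<lambda>(i, j).
     \<Sum>l<n. W $$ (i div q, l) * W $$ (j div q, l) * of_bool (e (j mod q) = e (i mod q) \<oplus> a \<otimes> e l))"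

lemma finite_carrier: "finite (carrier R)"
  using bij_betw_finite[OF enumeration] by simp

lemma q_pos: "q > 0"
  using weight order by linarith

lemma e_carrier: "u < q \<Longrightarrow> e u \<in> carrier R"
  using bij_betwE[OF enumeration] by blast

lemma e_inj: "u < q \<Longrightarrow> v < q \<Longrightarrow> e u = e v \<Longrightarrow> u = v"
  using bij_betw_imp_inj_on[OF enumeration] by (simp add: inj_on_def)

lemma index_div_mod: "i < n * q \<Longrightarrow> i div q < n" "i mod q < q"
  using q_pos by (simp_all add: less_mult_imp_div_less)

lemma shift_matrix_carrier: "shift_matrix a \<in> carrier_mat (n * q) (n * q)"
  by (simp add: shift_matrix_def)

lemma index_shift_matrix:
  "i < n * q \<Longrightarrow> j < n * q \<Longrightarrow> shift_matrix a $$ (i, j) =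
     (\<Sum>l<n. W $$ (i div q, l) * W $$ (j div q, l) * of_bool (e (j mod q) = e (i mod q) \<oplus> a \<otimes> e l))"
  by (simp add: shift_matrix_def)

lemma sum_over_indices:
  "(\<Sum>t<n * q. f (t div q) (e (t mod q))) = (\<Sum>s<n. \<Sum>z\<in>carrier R. f s z)"
proof -
  have "(\<Sum>u<q. f s (e u)) = (\<Sum>z\<in>carrier R. f s z)" for s
    by (rule sum.reindex_bij_betw[OF enumeration])
  then show ?thesis using sum_div_mod[OF q_pos, where g = "\<lambda>s u. f s (e u)"] by simp
qed

lemma column_products:
  assumes "l < n" and "l' < n"
  shows "(\<Sum>s<n. W $$ (s, l) * W $$ (s, l')) = (if l = l' then int k else 0)"
proof -
  have "W \<in> carrier_mat n n" using weighing by (simp add: weighing_matrix_def)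
  then have "(\<Sum>s<n. W $$ (s, l) * W $$ (s, l')) = (\<Sum>s<n. W\<^sup>T $$ (l, s) * W\<^sup>T $$ (l', s))"
    using assms by (intro sum.cong) auto
  then show ?thesis
    using weighing_matrix_row_products[OF weighing_matrix_transpose[OF weighing weight(1)] assms] by simp
qed

lemma shift_matrix_mult_transpose:
  assumes a: "a \<in> carrier R" and b: "b \<in> carrier R"
  shows "shift_matrix a * (shift_matrix b)\<^sup>T = int k \<cdot>\<^sub>m shift_matrix (a \<ominus> b)"
proof (rule eq_matI)
  fix i j
  assume "i < dim_row (int k \<cdot>\<^sub>m shift_matrix (a \<ominus> b))"
    and "j < dim_col (int k \<cdot>\<^sub>m shift_matrix (a \<ominus> b))"
  then have i: "i < n * q" and j: "j < n * q" by (simp_all add: shift_matrix_def)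
  define r r' x y where "r = i div q" and "r' = j div q" and "x = e (i mod q)" and "y = e (j mod q)"
  have x: "x \<in> carrier R" and y: "y \<in> carrier R"
    using e_carrier index_div_mod by (simp_all add: x_def y_def)
  have el: "e l \<in> carrier R" if "l < n" for l using e_carrier order that by simp
  have "(shift_matrix a * (shift_matrix b)\<^sup>T) $$ (i, j)
      = (\<Sum>t<n * q. shift_matrix a $$ (i, t) * shift_matrix b $$ (j, t))"
    using i j by (simp add: shift_matrix_def scalar_prod_def atLeast0LessThan)
  also have "\<dots> = (\<Sum>s<n. \<Sum>z\<in>carrier R.
      (\<Sum>l<n. W $$ (r, l) * W $$ (s, l) * of_bool (z = x \<oplus> a \<otimes> e l)) *
      (\<Sum>l'<n. W $$ (r', l') * W $$ (s, l') * of_bool (z = y \<oplus> b \<otimes> e l')))"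
    unfolding sum_over_indices[symmetric] using i j
    by (intro sum.cong refl) (simp add: index_shift_matrix r_def r'_def x_def y_def)
  also have "\<dots> = (\<Sum>l<n. \<Sum>l'<n. W $$ (r, l) * W $$ (r', l') *
      ((\<Sum>s<n. W $$ (s, l) * W $$ (s, l')) *
       (\<Sum>z\<in>carrier R. of_bool (z = x \<oplus> a \<otimes> e l) * of_bool (z = y \<oplus> b \<otimes> e l'))))"
    by (rule sum_product_rearrange)
  also have "\<dots> = (\<Sum>l<n. \<Sum>l'<n. if l' = l then W $$ (r, l) * W $$ (r', l) * int k *
      of_bool (x \<oplus> a \<otimes> e l = y \<oplus> b \<otimes> e l) else 0)"
    using x a el
    by (intro sum.cong refl) (simp add: column_products sum_of_bool_eq_mult[OF finite_carrier])
  also have "\<dots> = int k * (\<Sum>l<n. W $$ (r, l) * W $$ (r', l) * of_bool (y = x \<oplus> (a \<ominus> b) \<otimes> e l))"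
    using x y a b el by (simp add: sum_distrib_left add_mult_eq_add_mult_iff ac_simps)
  also have "\<dots> = (int k \<cdot>\<^sub>m shift_matrix (a \<ominus> b)) $$ (i, j)"
    using i j by (simp add: shift_matrix_def r_def r'_def x_def y_def)
  finally show "(shift_matrix a * (shift_matrix b)\<^sup>T) $$ (i, j)
      = (int k \<cdot>\<^sub>m shift_matrix (a \<ominus> b)) $$ (i, j)" .
qed (simp_all add: shift_matrix_def)

lemma shift_matrix_zero: "shift_matrix \<zero> = int k \<cdot>\<^sub>m 1\<^sub>m (n * q)"
proof (rule eq_matI)
  fix i j assume "i < dim_row (int k \<cdot>\<^sub>m 1\<^sub>m (n * q))" "j < dim_col (int k \<cdot>\<^sub>m 1\<^sub>m (n * q))"
  then have i: "i < n * q" and j: "j < n * q" by simp_all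
  have "shift_matrix \<zero> $$ (i, j) = (\<Sum>l<n. W $$ (i div q, l) * W $$ (j div q, l)) * of_bool (i mod q = j mod q)"
    unfolding index_shift_matrix[OF i j] sum_distrib_right
  proof (intro sum.cong refl)
    fix l assume "l \<in> {..<n}"
    then have "e l \<in> carrier R" using e_carrier order by simp
    then have "e (i mod q) \<oplus> \<zero> \<otimes> e l = e (i mod q)"
      using e_carrier[OF index_div_mod(2)] by simp
    moreover have "e (j mod q) = e (i mod q) \<longleftrightarrow> i mod q = j mod q"
      using e_inj[of "j mod q" "i mod q"] index_div_mod(2) by auto
    ultimately show "W $$ (i div q, l) * W $$ (j div q, l) * of_bool (e (j mod q) = e (i mod q) \<oplus> \<zero> \<otimes> e l)
        = W $$ (i div q, l) * W $$ (j div q, l) * of_bool (i mod q = j mod q)"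
      by simp
  qed
  also have "\<dots> = (if i div q = j div q \<and> i mod q = j mod q then int k else 0)"
    using weighing_matrix_row_products[OF weighing] index_div_mod i j by simp
  also have "\<dots> = (int k \<cdot>\<^sub>m 1\<^sub>m (n * q)) $$ (i, j)"
  proof -
    have "i div q = j div q \<and> i mod q = j mod q \<longleftrightarrow> i = j"
      by (metis div_mult_mod_eq)
    then show ?thesis using i j by simp
  qed
  finally show "shift_matrix \<zero> $$ (i, j) = (int k \<cdot>\<^sub>m 1\<^sub>m (n * q)) $$ (i, j)" .
qed (simp_all add: shift_matrix_def)

lemma shift_matrix_entries:
  assumes c: "c \<in> carrier R" "c \<noteq> \<zero>" and i: "i < n * q" and j: "j < n * q"
  shows "shift_matrix c $$ (i, j) \<in> {1, -1, 0}"
proof -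
  define x y where "x = e (i mod q)" and "y = e (j mod q)"
  have x: "x \<in> carrier R" using e_carrier index_div_mod by (simp add: x_def)
  have el: "e l \<in> carrier R" if "l < n" for l using e_carrier order that by simp
  have unique: "l = l'" if "l < n" "l' < n" "y = x \<oplus> c \<otimes> e l" "y = x \<oplus> c \<otimes> e l'" for l l'
  proof -
    have "c \<otimes> e l = c \<otimes> e l'" using that x c el by (metis add.right_cancel a_comm m_closed)
    then have "e l = e l'" using that c el by (simp add: m_lcancel)
    then show ?thesis using e_inj order that by simp
  qed
  show ?thesis
  proof (cases "\<exists>l<n. y = x \<oplus> c \<otimes> e l")
    case True
    then obtain l0 where l0: "l0 < n" "y = x \<oplus> c \<otimes> e l0" by blast
    have "shift_matrix c $$ (i, j) = (\<Sum>l<n. if l = l0 then W $$ (i div q, l) * W $$ (j div q, l) else 0)"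
      unfolding index_shift_matrix[OF i j] x_def[symmetric] y_def[symmetric]
      using unique l0 by (intro sum.cong refl) auto
    also have "\<dots> = W $$ (i div q, l0) * W $$ (j div q, l0)" using l0 by simp
    moreover have "W $$ (i div q, l0) \<in> {1, -1, 0}" "W $$ (j div q, l0) \<in> {1, -1, 0}"
      using weighing index_div_mod i j l0 by (simp_all add: weighing_matrix_def)
    ultimately show ?thesis by auto
  next
    case False
    then show ?thesis
      using i j by (auto simp: index_shift_matrix x_def[symmetric] y_def[symmetric] intro!: sum.neutral)
  qed
qed

lemma weighing_matrix_shift_matrix:
  assumes c: "c \<in> carrier R" "c \<noteq> \<zero>"
  shows "weighing_matrix (n * q) (k ^ 2) (shift_matrix c)"
proof -
  have "shift_matrix c * (shift_matrix c)\<^sup>T = int k \<cdot>\<^sub>m shift_matrix \<zero>"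
  proof -
    have "c \<ominus> c = \<zero>" using c(1) by simp
    then show ?thesis using shift_matrix_mult_transpose[OF c(1) c(1)] by simp
  qed
  also have "\<dots> = of_nat (k ^ 2) \<cdot>\<^sub>m 1\<^sub>m (n * q)"
    unfolding shift_matrix_zero by (rule eq_matI) (auto simp: power2_eq_square)
  finally show ?thesis
    using shift_matrix_carrier shift_matrix_entries[OF c] by (simp add: weighing_matrix_def)
qed

lemma ex_row_vanishing_at_zero_points: "\<exists>r<n. \<forall>l<n. e l = \<zero> \<longrightarrow> W $$ (r, l) = 0"
proof (cases "\<exists>l0<n. e l0 = \<zero>")
  case True
  then obtain l0 where l0: "l0 < n" "e l0 = \<zero>" by blast
  obtain r where r: "r < n" "W\<^sup>T $$ (l0, r) = 0"
    using weighing_matrix_row_has_zero[OF weighing_matrix_transpose[OF weighing weight(1)] weight(2) l0(1)]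
    by blast
  have "W $$ (r, l) = 0" if "l < n" "e l = \<zero>" for l
  proof -
    have "l = l0" using e_inj[of l l0] that l0 order by simp
    moreover have "W \<in> carrier_mat n n" using weighing by (simp add: weighing_matrix_def)
    ultimately show ?thesis using r l0 by simp
  qed
  then show ?thesis using r(1) by blast
next
  case False
  then show ?thesis using weight by auto
qed

lemma shift_matrix_diagonal_zero:
  assumes c: "c \<in> carrier R" "c \<noteq> \<zero>"
  shows "\<exists>i<n * q. shift_matrix c $$ (i, i) = 0"
proof -
  obtain r where r: "r < n" and zero: "\<And>l. l < n \<Longrightarrow> e l = \<zero> \<Longrightarrow> W $$ (r, l) = 0"
    using ex_row_vanishing_at_zero_points by blast
  have i: "r * q < n * q" and div: "r * q div q = r" and mod: "r * q mod q = 0"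
    using r q_pos by simp_all
  have "shift_matrix c $$ (r * q, r * q) = (\<Sum>l<n. 0)"
    unfolding index_shift_matrix[OF i i] div mod
  proof (intro sum.cong refl)
    fix l assume "l \<in> {..<n}"
    then have el: "e l \<in> carrier R" and e0: "e 0 \<in> carrier R" using e_carrier order q_pos by simp_all
    show "W $$ (r, l) * W $$ (r, l) * of_bool (e 0 = e 0 \<oplus> c \<otimes> e l) = 0"
    proof (cases "e 0 = e 0 \<oplus> c \<otimes> e l")
      case True
      then have "c \<otimes> e l = \<zero>" using e0 el c by simp
      then have "e l = \<zero>" using integral_iff el c by simp
      then show ?thesis using zero \<open>l \<in> {..<n}\<close> by simp
    qed simp
  qed
  then show ?thesis using i by (metis sum.neutral_const)
qed

lemma inj_on_shift_matrix: "inj_on shift_matrix (carrier R)"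
proof (rule inj_onI, rule ccontr)
  fix a b
  assume a: "a \<in> carrier R" and b: "b \<in> carrier R"
    and eq: "shift_matrix a = shift_matrix b" and "a \<noteq> b"
  then have c: "a \<ominus> b \<in> carrier R" "a \<ominus> b \<noteq> \<zero>" by (simp_all add: r_right_minus_eq)
  obtain i where i: "i < n * q" and diag: "shift_matrix (a \<ominus> b) $$ (i, i) = 0"
    using shift_matrix_diagonal_zero[OF c] by blast
  have "int k \<cdot>\<^sub>m shift_matrix (a \<ominus> b) = int k \<cdot>\<^sub>m shift_matrix (a \<ominus> a)"
    using shift_matrix_mult_transpose[OF a b] shift_matrix_mult_transpose[OF a a] eq by simp
  then have "int k * shift_matrix (a \<ominus> b) $$ (i, i) = int k * shift_matrix \<zero> $$ (i, i)"
    using a i by (metis index_smult_mat(1) shift_matrix_carrier carrier_matD r_right_minus_eq)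
  then show False using diag i weight(1) by (simp add: shift_matrix_zero)
qed

lemma unbiased_shift_matrix:
  assumes a: "a \<in> carrier R" "a \<noteq> \<zero>" and b: "b \<in> carrier R" "b \<noteq> \<zero>" and "a \<noteq> b"
  shows "unbiased (n * q) (k ^ 2) (shift_matrix a) (shift_matrix b)"
  unfolding unbiased_def
proof (intro exI conjI)
  have c: "a \<ominus> b \<in> carrier R" "a \<ominus> b \<noteq> \<zero>" using a b \<open>a \<noteq> b\<close> by (simp_all add: r_right_minus_eq)
  show "weighing_matrix (n * q) (k ^ 2) (shift_matrix (a \<ominus> b))" by (rule weighing_matrix_shift_matrix[OF c])
  show "(1 / sqrt (real (k ^ 2))) \<cdot>\<^sub>m map_mat real_of_int (shift_matrix a * (shift_matrix b)\<^sup>T)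
      = map_mat real_of_int (shift_matrix (a \<ominus> b))"
    unfolding shift_matrix_mult_transpose[OF a(1) b(1)] using weight(1)
    by (intro eq_matI) (auto simp: shift_matrix_def)
qed

theorem mutually_unbiased_shift_matrices:
  defines "S \<equiv> shift_matrix ` (carrier R - {\<zero>})"
  shows "finite S" and "card S = q - 1" and "mutually_unbiased_weighing (n * q) (k ^ 2) S"
proof -
  have "card (carrier R) = q" using bij_betw_same_card[OF enumeration] by simp
  then show "card S = q - 1"
    unfolding S_def using inj_on_shift_matrix finite_carrier
    by (simp add: card_image inj_on_diff card_Diff_singleton)
  show "finite S" unfolding S_def using finite_carrier by simp
  show "mutually_unbiased_weighing (n * q) (k ^ 2) S"
    unfolding mutually_unbiased_weighing_def S_def
    using weighing_matrix_shift_matrix unbiased_shift_matrix by auto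
qed

end

theorem mutually_unbiased_weighing_matrices_exist:
  assumes W: "weighing_matrix n k W" and k: "0 < k" "k < n" and q: "primepow q" "n \<le> q"
  shows "\<exists>S. finite S \<and> card S = q - 1 \<and> mutually_unbiased_weighing (n * q) (k ^ 2) S"
proof -
  obtain L :: "((int list \<times> nat) multiset \<Rightarrow> int) ring"
    where L: "field L" "finite (carrier L)" "card (carrier L) = q"
    using finite_field_exists[OF q(1)] by blast
  obtain e where "bij_betw e {..<q} (carrier L)"
    using ex_bij_betw_nat_finite[OF L(2)] L(3) by (auto simp: atLeast0LessThan)
  then interpret unbiased_weighing_construction L q n k W e
    using L(1) W k q(2) by (simp add: unbiased_weighing_construction_def unbiased_weighing_construction_axioms_def)
  show ?thesis using mutually_unbiased_shift_matrices by blast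
qed

theorem corollary3p4:
  fixes n q :: nat
  assumes "n \<ge> 2"
    and "\<exists>W. weighing_matrix n (n - 1) W"
    and "primepow q"
    and "q \<ge> n"
  shows "\<exists>S. finite S \<and> card S = q - 1 \<and>
             mutually_unbiased_weighing (n * q) ((n - 1)^2) S"
proof -
  obtain W where "weighing_matrix n (n - 1) W" using assms(2) by blast
  moreover have "0 < n - 1" "n - 1 < n" using assms(1) by simp_all
  ultimately show ?thesis using mutually_unbiased_weighing_matrices_exist assms(3,4) by blast
qed

end
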